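(* Let $G$ be a graph containing no cycle of length 6, let $x\in V(G)$, and let $A$ be a bipartite connected component of $G[N_2(x)]$ with vertex sets of bipartition $V_1$ and $V_2$. Then for each $i\in\{1,2\}$, if $|V_i|\ge 2$ then $|N(x)\cap N(V_i)|=1$.
   Context: All graphs are finite, simple and undirected; "containing no cycle of length 6" means having no subgraph (not necessarily induced) isomorphic to $C_6$. $N_i(S)$ denotes the set of vertices at distance exactly $i$ from the vertex set $S$, $N(S)=N_1(S)$, $N(v)=N(\{v\})$, $N_2(v)=N_2(\{v\})$. *)

theory Defs
  imports Main
begin

definition simple_graph :: "'a set \<Rightarrow> ('a \<Rightarrow> 'a \<Rightarrow> bool) \<Rightarrow> bool" where
  "simple_graph V E \<longleftrightarrow> finite V \<and> (\<forall>u v. E u v \<longrightarrow> u \<in> V \<and> v \<in> V)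
     \<and> (\<forall>u v. E u v \<longrightarrow> E v u) \<and> (\<forall>v. \<not> E v v)"

definition has_C6 :: "'a set \<Rightarrow> ('a \<Rightarrow> 'a \<Rightarrow> bool) \<Rightarrow> bool" where
  "has_C6 V E \<longleftrightarrow> (\<exists>xs. length xs = 6 \<and> distinct xs \<and> set xs \<subseteq> V \<and>
      (\<forall>i<6. E (xs ! i) (xs ! ((i + 1) mod 6))))"

fun within :: "'a set \<Rightarrow> ('a \<Rightarrow> 'a \<Rightarrow> bool) \<Rightarrow> nat \<Rightarrow> 'a set \<Rightarrow> 'a \<Rightarrow> bool" where
  "within V E 0 S v \<longleftrightarrow> v \<in> S \<and> v \<in> V"
| "within V E (Suc k) S v \<longleftrightarrow> within V E k S v \<or> (v \<in> V \<and> (\<exists>u. within V E k S u \<and> E u v))"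

text \<open>N_i(S): vertices at distance exactly i from S.\<close>
fun Nb :: "'a set \<Rightarrow> ('a \<Rightarrow> 'a \<Rightarrow> bool) \<Rightarrow> nat \<Rightarrow> 'a set \<Rightarrow> 'a set" where
  "Nb V E 0 S = S \<inter> V"
| "Nb V E (Suc k) S = {v \<in> V. within V E (Suc k) S v \<and> \<not> within V E k S v}"

definition connected_in :: "('a \<Rightarrow> 'a \<Rightarrow> bool) \<Rightarrow> 'a set \<Rightarrow> bool" where
  "connected_in E C \<longleftrightarrow> (\<forall>u\<in>C. \<forall>v\<in>C. (\<lambda>a b. a \<in> C \<and> b \<in> C \<and> E a b)\<^sup>*\<^sup>* u v)"

definition is_component :: "('a \<Rightarrow> 'a \<Rightarrow> bool) \<Rightarrow> 'a set \<Rightarrow> 'a set \<Rightarrow> bool" where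
  "is_component E W C \<longleftrightarrow> C \<noteq> {} \<and> C \<subseteq> W \<and> connected_in E C \<and>
     (\<forall>u\<in>C. \<forall>v\<in>W. E u v \<longrightarrow> v \<in> C)"

definition bipartition :: "('a \<Rightarrow> 'a \<Rightarrow> bool) \<Rightarrow> 'a set \<Rightarrow> 'a set \<Rightarrow> 'a set \<Rightarrow> bool" where
  "bipartition E C V1 V2 \<longleftrightarrow> V1 \<union> V2 = C \<and> V1 \<inter> V2 = {} \<and>
     (\<forall>u\<in>V1. \<forall>v\<in>V1. \<not> E u v) \<and> (\<forall>u\<in>V2. \<forall>v\<in>V2. \<not> E u v)"

end

theory Submission
  imports Defs
begin

text \<open>
  Two distinct vertices z, z' of N_2(x) with a common neighbour w in N_2(x) cannot have
  different neighbours b, c in N(x), since x b z w z' c would be a 6-cycle. Along a walk in the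
  bipartite component A this forces a neighbour of one vertex of V_i in N(x) to be adjacent to
  all of V_i. If |V_i| >= 2, connectivity provides two vertices of V_i at distance two,
  and the same cycle shows that two such common neighbours coincide.
\<close>

lemma has_C6I:
  assumes "simple_graph V E" "v\<^sub>0 \<in> V" "distinct [v\<^sub>0, v\<^sub>1, v\<^sub>2, v\<^sub>3, v\<^sub>4, v\<^sub>5]"
    and "E v\<^sub>0 v\<^sub>1" "E v\<^sub>1 v\<^sub>2" "E v\<^sub>2 v\<^sub>3" "E v\<^sub>3 v\<^sub>4" "E v\<^sub>4 v\<^sub>5" "E v\<^sub>5 v\<^sub>0"
  shows "has_C6 V E"
proof -
  let ?xs = "[v\<^sub>0, v\<^sub>1, v\<^sub>2, v\<^sub>3, v\<^sub>4, v\<^sub>5]"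
  have "set ?xs \<subseteq> V"
    using assms(1,2,4-8) unfolding simple_graph_def by auto
  moreover have "E (?xs ! i) (?xs ! ((i + 1) mod 6))" if "i < 6" for i
  proof -
    have "i = 0 \<or> i = 1 \<or> i = 2 \<or> i = 3 \<or> i = 4 \<or> i = 5" using that by linarith
    then show ?thesis by (elim disjE) (simp_all add: assms(4-9))
  qed
  ultimately show ?thesis
    unfolding has_C6_def using assms(3) by (intro exI[of _ ?xs]) simp
qed

lemma Nb_1_iff: "v \<in> Nb V E 1 S \<longleftrightarrow> v \<in> V \<and> v \<notin> S \<and> (\<exists>u\<in>S \<inter> V. E u v)"
  by auto

lemma Nb_2_singleton:
  assumes "simple_graph V E" "x \<in> V"
  shows "Nb V E 2 {x} = {v \<in> V. v \<noteq> x \<and> \<not> E x v \<and> (\<exists>u. E x u \<and> E u v)}"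
proof -
  have within_1: "within V E 1 {x} v \<longleftrightarrow> v = x \<or> E x v" for v
    using assms unfolding simple_graph_def by auto
  have "Nb V E 2 {x} = {v \<in> V. within V E 2 {x} v \<and> \<not> within V E 1 {x} v}"
    by (simp add: numeral_2_eq_2)
  also have "\<dots> = {v \<in> V. v \<noteq> x \<and> \<not> E x v \<and> (\<exists>u. E x u \<and> E u v)}"
    using assms(1) unfolding numeral_2_eq_2 within.simps(2) One_nat_def[symmetric] within_1
    unfolding simple_graph_def by blast
  finally show ?thesis .
qed

lemma bipartition_swap: "bipartition E C V\<^sub>1 V\<^sub>2 \<longleftrightarrow> bipartition E C V\<^sub>2 V\<^sub>1"
  unfolding bipartition_def by blast

lemma bipartition_edge_crosses:
  assumes "bipartition E C V\<^sub>1 V\<^sub>2" "u \<in> C" "v \<in> C" "E u v"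
  shows "u \<in> V\<^sub>1 \<longleftrightarrow> v \<in> V\<^sub>2"
  using assms unfolding bipartition_def by blast

lemma connected_bipartite_distance_two:
  assumes conn: "connected_in E C" and bip: "bipartition E C V\<^sub>1 V\<^sub>2"
    and z: "z \<in> V\<^sub>1" "z' \<in> V\<^sub>1" "z \<noteq> z'"
  obtains w y where "w \<in> C" "y \<in> V\<^sub>1" "y \<noteq> z" "E z w" "E w y"
proof -
  let ?R = "\<lambda>a b. a \<in> C \<and> b \<in> C \<and> E a b"
  let ?goal = "\<exists>w y. w \<in> C \<and> y \<in> V\<^sub>1 \<and> y \<noteq> z \<and> E z w \<and> E w y"
  have part: "V\<^sub>1 \<union> V\<^sub>2 = C" "V\<^sub>1 \<inter> V\<^sub>2 = {}" "\<forall>u\<in>V\<^sub>2. \<forall>v\<in>V\<^sub>2. \<not> E u v"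
    using bip unfolding bipartition_def by blast+
  have walk: "y = z \<or> (y \<in> V\<^sub>2 \<and> E z y) \<or> ?goal" if "?R\<^sup>*\<^sup>* z y" for y
    using that
  proof (induction rule: rtranclp_induct)
    case (step y y')
    then have y: "y \<in> C" "y' \<in> C" "E y y'" by blast+
    from step.IH consider "y = z" | "y \<in> V\<^sub>2" "E z y" | ?goal by blast
    then show ?case
    proof cases
      case 1
      then have "y' \<in> V\<^sub>2" using bipartition_edge_crosses[OF bip y] z(1) by blast
      then show ?thesis using 1 y(3) by blast
    next
      case 2
      then have "y' \<in> V\<^sub>1" using y(2,3) part by blast
      then show ?thesis using 2 y by blast
    qed simp
  qed simp
  have "?R\<^sup>*\<^sup>* z z'" using conn z(1,2) part(1) unfolding connected_in_def by blast
  then have ?goal using walk[of z'] z part(2) by blast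
  then show ?thesis using that by blast
qed

lemma C6_free_N2_path_same_N1_neighbour:
  assumes sg: "simple_graph V E" and noc: "\<not> has_C6 V E" and x: "x \<in> V"
    and N\<^sub>2: "z \<in> Nb V E 2 {x}" "w \<in> Nb V E 2 {x}" "z' \<in> Nb V E 2 {x}"
    and "E z w" "E w z'" "z \<noteq> z'"
    and "E x b" "E b z" "E x c" "E c z'"
  shows "b = c"
proof (rule ccontr)
  assume "b \<noteq> c"
  have irr: "\<And>v. \<not> E v v" and sym: "\<And>u v. E u v \<Longrightarrow> E v u"
    using sg unfolding simple_graph_def by blast+
  have "distinct [x, b, z, w, z', c]"
    using N\<^sub>2 assms(7-13) \<open>b \<noteq> c\<close> irr unfolding Nb_2_singleton[OF sg x] by auto
  then have "has_C6 V E"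
    using has_C6I[OF sg x] assms(7-13) sym by blast
  then show False using noc by blast
qed

lemma N1_neighbour_adjacent_to_whole_part:
  assumes sg: "simple_graph V E" and noc: "\<not> has_C6 V E" and x: "x \<in> V"
    and comp: "is_component E (Nb V E 2 {x}) A" and bip: "bipartition E A V\<^sub>1 V\<^sub>2"
    and u: "u \<in> V\<^sub>1" "E x a" "E a u" and z: "z \<in> V\<^sub>1"
  shows "E a z"
proof -
  let ?R = "\<lambda>a b. a \<in> A \<and> b \<in> A \<and> E a b"
  have AN\<^sub>2: "A \<subseteq> Nb V E 2 {x}" and conn: "connected_in E A"
    using comp unfolding is_component_def by blast+
  have part: "V\<^sub>1 \<subseteq> A" "V\<^sub>2 \<subseteq> A" "V\<^sub>1 \<inter> V\<^sub>2 = {}" "V\<^sub>1 \<union> V\<^sub>2 = A"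
    using bip unfolding bipartition_def by blast+
  have sym: "\<And>u v. E u v \<Longrightarrow> E v u" using sg unfolding simple_graph_def by blast
  have walk: "(y \<in> V\<^sub>1 \<longrightarrow> E a y) \<and> (y \<in> V\<^sub>2 \<longrightarrow> (\<exists>z\<in>V\<^sub>1. E z y \<and> E a z))"
    if "?R\<^sup>*\<^sup>* u y" for y
    using that
  proof (induction rule: rtranclp_induct)
    case base
    then show ?case using u part by blast
  next
    case (step y y')
    then have y: "y \<in> A" "y' \<in> A" "E y y'" by blast+
    show ?case
    proof (cases "y' \<in> V\<^sub>1")
      case True
      then have "y \<in> V\<^sub>2" using bipartition_edge_crosses[OF bip y(2,1) sym[OF y(3)]] by blast
      then obtain w where w: "w \<in> V\<^sub>1" "E w y" "E a w" using step.IH by blast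
      obtain c where c: "E x c" "E c y'"
        using y(2) AN\<^sub>2 unfolding Nb_2_singleton[OF sg x] by blast
      have "w \<in> Nb V E 2 {x}" "y \<in> Nb V E 2 {x}" "y' \<in> Nb V E 2 {x}"
        using w(1) y(1,2) part(1) AN\<^sub>2 by blast+
      then have "a = c" if "w \<noteq> y'"
        using C6_free_N2_path_same_N1_neighbour[OF sg noc x _ _ _ w(2) y(3) that u(2) w(3) c]
        by blast
      then have "E a y'" using w(3) c(2) by blast
      then show ?thesis using True part(3) by blast
    next
      case False
      then have "y' \<in> V\<^sub>2" using y(2) part(4) by blast
      moreover have "y \<in> V\<^sub>1" using bipartition_edge_crosses[OF bip y] calculation by blast
      ultimately show ?thesis using step.IH y(3) part(3) by blast
    qed
  qed
  have "?R\<^sup>*\<^sup>* u z" using conn u(1) z part(1) unfolding connected_in_def by blast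
  then show ?thesis using walk z by blast
qed

lemma card_N1_inter_N1_part:
  assumes sg: "simple_graph V E" and noc: "\<not> has_C6 V E" and x: "x \<in> V"
    and comp: "is_component E (Nb V E 2 {x}) A" and bip: "bipartition E A V\<^sub>1 V\<^sub>2"
    and two: "card V\<^sub>1 \<ge> 2"
  shows "card (Nb V E 1 {x} \<inter> Nb V E 1 V\<^sub>1) = 1"
proof -
  have AN\<^sub>2: "A \<subseteq> Nb V E 2 {x}" and conn: "connected_in E A"
    using comp unfolding is_component_def by blast+
  have V\<^sub>1N\<^sub>2: "V\<^sub>1 \<subseteq> Nb V E 2 {x}" using AN\<^sub>2 bip unfolding bipartition_def by blast
  have sym: "\<And>u v. E u v \<Longrightarrow> E v u" using sg unfolding simple_graph_def by blast
  have "finite V\<^sub>1" "\<not> card V\<^sub>1 \<le> Suc 0" using two by (auto intro: card_ge_0_finite)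
  then obtain z z' where z: "z \<in> V\<^sub>1" "z' \<in> V\<^sub>1" "z \<noteq> z'"
    using card_le_Suc0_iff_eq by blast
  obtain w y where wy: "w \<in> A" "y \<in> V\<^sub>1" "y \<noteq> z" "E z w" "E w y"
    using connected_bipartite_distance_two[OF conn bip z] .
  have N\<^sub>2: "z \<in> Nb V E 2 {x}" "w \<in> Nb V E 2 {x}" "y \<in> Nb V E 2 {x}"
    using z(1) wy(1,2) AN\<^sub>2 V\<^sub>1N\<^sub>2 by blast+
  obtain a where a: "E x a" "E a z"
    using N\<^sub>2(1) unfolding Nb_2_singleton[OF sg x] by blast
  have "Nb V E 1 {x} \<inter> Nb V E 1 V\<^sub>1 = {a}"
  proof (intro equalityI subsetI)
    fix b assume "b \<in> Nb V E 1 {x} \<inter> Nb V E 1 V\<^sub>1"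
    then obtain u where u: "u \<in> V\<^sub>1" "E x b" "E b u" using x sym unfolding Int_iff Nb_1_iff by blast
    have "E b y" using N1_neighbour_adjacent_to_whole_part[OF sg noc x comp bip u wy(2)] .
    then have "a = b"
      by (rule C6_free_N2_path_same_N1_neighbour[OF sg noc x N\<^sub>2 wy(4,5) wy(3)[symmetric] a u(2)])
    then show "b \<in> {a}" by simp
  next
    fix b assume "b \<in> {a}"
    then have b: "b = a" by simp
    have "a \<in> V" "\<not> E a a" using a(1) sg unfolding simple_graph_def by blast+
    moreover have "a \<notin> V\<^sub>1" using a(1) V\<^sub>1N\<^sub>2 unfolding Nb_2_singleton[OF sg x] by blast
    moreover have "z \<in> V" using z(1) V\<^sub>1N\<^sub>2 unfolding Nb_2_singleton[OF sg x] by blast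
    ultimately show "b \<in> Nb V E 1 {x} \<inter> Nb V E 1 V\<^sub>1"
      unfolding b Int_iff Nb_1_iff using a x z(1) sym by blast
  qed
  then show ?thesis by simp
qed

theorem lemma2p4:
  fixes V :: "'a set" and E :: "'a \<Rightarrow> 'a \<Rightarrow> bool"
  assumes "simple_graph V E"
    and "\<not> has_C6 V E"
    and "x \<in> V"
    and "is_component E (Nb V E 2 {x}) A"
    and "bipartition E A V1 V2"
  shows "(card V1 \<ge> 2 \<longrightarrow> card (Nb V E 1 {x} \<inter> Nb V E 1 V1) = 1) \<and>
         (card V2 \<ge> 2 \<longrightarrow> card (Nb V E 1 {x} \<inter> Nb V E 1 V2) = 1)"
  using card_N1_inter_N1_part[OF assms(1-5)]
    card_N1_inter_N1_part[OF assms(1-4) bipartition_swap[THEN iffD1, OF assms(5)]] by blast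

end
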